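(* Let $\alpha>0$, $0<q<\infty$, and let $\mu$ be a positive Borel measure on $\mathbb{C}$. If $\mu$ is an $(\infty,q)$ Fock-Carleson measure, then $\tilde{\mu}_t\in L^\infty(\mathbb{C},dA)$ for every $t>0$.
   Context: $F^\infty_\alpha$ is the space of entire functions $f$ with $\|f\|_{\infty,\alpha}=\sup_{z}|f(z)|e^{-\alpha|z|^2/2}<\infty$. $\mu$ is an $(\infty,q)$ Fock-Carleson measure if there is $C>0$ with $\left[\int_{\mathbb{C}}|f(z)e^{-\alpha|z|^2/2}|^q\,d\mu(z)\right]^{1/q}\le C\|f\|_{\infty,\alpha}$ for all $f\in F^\infty_\alpha$. For $t>0$, $\tilde{\mu}_t(z)=\frac{\alpha}{\pi}\int_{\mathbb{C}}e^{-\alpha t|z-w|^2/2}\,d\mu(w)$, and $dA$ is area measure. *)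

theory Defs
  imports "HOL-Analysis.Analysis"
begin

definition fock_weight :: "real \<Rightarrow> complex \<Rightarrow> real" where
  "fock_weight \<alpha> z = exp (- \<alpha> * (cmod z)\<^sup>2 / 2)"

definition in_fock_inf :: "real \<Rightarrow> (complex \<Rightarrow> complex) \<Rightarrow> bool" where
  "in_fock_inf \<alpha> f \<longleftrightarrow> f holomorphic_on UNIV \<and>
     bdd_above (range (\<lambda>z. cmod (f z) * fock_weight \<alpha> z))"

definition fock_inf_norm :: "real \<Rightarrow> (complex \<Rightarrow> complex) \<Rightarrow> real" where
  "fock_inf_norm \<alpha> f = (SUP z. cmod (f z) * fock_weight \<alpha> z)"

text \<open>(infty,q) Fock-Carleson measure: there is C>0 with
  (int |f e^{-alpha|z|^2/2}|^q dmu)^{1/q} <= C ||f||, written equivalently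
  as int |f e^{..}|^q dmu <= (C ||f||)^q in [0,infty].\<close>
definition fock_carleson_inf :: "real \<Rightarrow> real \<Rightarrow> complex measure \<Rightarrow> bool" where
  "fock_carleson_inf \<alpha> q \<mu> \<longleftrightarrow> (\<exists>C>0. \<forall>f. in_fock_inf \<alpha> f \<longrightarrow>
     (\<integral>\<^sup>+ z. ennreal ((cmod (f z) * fock_weight \<alpha> z) powr q) \<partial>\<mu>)
       \<le> ennreal ((C * fock_inf_norm \<alpha> f) powr q))"

text \<open>Berezin-type transform tilde mu_t (possibly infinite, hence ennreal).\<close>
definition mu_tilde :: "real \<Rightarrow> complex measure \<Rightarrow> real \<Rightarrow> complex \<Rightarrow> ennreal" where
  "mu_tilde \<alpha> \<mu> t z = ennreal (\<alpha> / pi) *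
     (\<integral>\<^sup>+ w. ennreal (exp (- \<alpha> * t * (cmod (z - w))\<^sup>2 / 2)) \<partial>\<mu>)"

definition ess_bounded_area :: "(complex \<Rightarrow> ennreal) \<Rightarrow> bool" where
  "ess_bounded_area g \<longleftrightarrow> (\<exists>M::real. AE z in lebesgue. g z \<le> ennreal M)"

end

theory Submission
  imports Defs
begin

text \<open>Testing the Carleson inequality on the normalised reproducing kernels
  k_b(z) = exp(alpha conj(b) z - alpha |b|^2/2), for which |k_b(z)| e^(-alpha |z|^2/2) =
  e^(-alpha |z-b|^2/2) and ||k_b|| = 1, shows that the Gaussians e^(-(q alpha/2) |w-b|^2) have
  mu-integral bounded uniformly in b. A Gaussian of any other width is dominated, up to a
  constant factor, by the Gaussians of width q alpha/2 centred at the Gaussian integers m + i n,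
  weighted by e^(-|m - Re z|) e^(-|n - Im z|); these weights are summable uniformly in z.
  Hence tilde-mu_t is in fact bounded everywhere.\<close>

lemma nn_integral_exp_neg_nat:
  "(\<integral>\<^sup>+ n. ennreal (exp (- real n)) \<partial>count_space UNIV) = ennreal (1 / (1 - exp (-1)))"
proof -
  have geom: "exp (- real n) = exp (-1) ^ n" for n
    by (simp add: exp_of_nat_mult[symmetric])
  have "(\<integral>\<^sup>+ n. ennreal (exp (- real n)) \<partial>count_space UNIV) = (\<Sum>n. ennreal (exp (-1) ^ n))"
    by (simp add: nn_integral_count_space_nat geom)
  also have "\<dots> = ennreal (\<Sum>n. exp (-1) ^ n)"
    by (intro suminf_ennreal2 summable_geometric) auto
  also have "(\<Sum>n. exp (-1::real) ^ n) = 1 / (1 - exp (-1))"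
    by (intro suminf_geometric) auto
  finally show ?thesis .
qed

lemma nn_integral_count_space_int_le:
  fixes f :: "int \<Rightarrow> ennreal"
  shows "(\<integral>\<^sup>+ j. f j \<partial>count_space UNIV)
    \<le> (\<integral>\<^sup>+ n. f (int n) \<partial>count_space UNIV) + (\<integral>\<^sup>+ n. f (- int n) \<partial>count_space UNIV)"
proof -
  have reindex: "(\<integral>\<^sup>+ j. f j * indicator (range g) j \<partial>count_space UNIV) = (\<integral>\<^sup>+ n. f (g n) \<partial>count_space UNIV)"
    if "inj g" for g :: "nat \<Rightarrow> int"
    using nn_integral_bij_count_space[OF inj_on_imp_bij_betw[OF that], of f]
    by (simp add: nn_integral_count_space_indicator)
  have "(\<integral>\<^sup>+ j. f j \<partial>count_space UNIV)
      \<le> (\<integral>\<^sup>+ j. f j * indicator (range int) j + f j * indicator (range (\<lambda>n. - int n)) j \<partial>count_space UNIV)"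
  proof (intro nn_integral_mono)
    fix j :: int
    have "j \<in> range int \<or> j \<in> range (\<lambda>n. - int n)"
      by (cases "j \<ge> 0") (auto intro: range_eqI[of _ _ "nat j"] range_eqI[of _ _ "nat (- j)"])
    then show "f j \<le> f j * indicator (range int) j + f j * indicator (range (\<lambda>n. - int n)) j"
      by (auto split: split_indicator)
  qed
  also have "\<dots> = (\<integral>\<^sup>+ n. f (int n) \<partial>count_space UNIV) + (\<integral>\<^sup>+ n. f (- int n) \<partial>count_space UNIV)"
    by (simp add: nn_integral_add reindex inj_def)
  finally show ?thesis .
qed

lemma nn_integral_exp_neg_abs_shift_le:
  fixes x :: real
  shows "(\<integral>\<^sup>+ m. ennreal (exp (- \<bar>of_int m - x\<bar>)) \<partial>count_space UNIV)
    \<le> ennreal (2 * exp 1 / (1 - exp (-1)))"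
proof -
  define k where "k = \<lfloor>x\<rfloor>"
  have shift: "exp (- \<bar>of_int m - x\<bar>) \<le> exp 1 * exp (- \<bar>of_int (m - k)\<bar>)" for m
  proof -
    have "\<bar>of_int (m - k)\<bar> \<le> \<bar>of_int m - x\<bar> + 1"
      using of_int_floor_le[of x] real_of_int_floor_add_one_gt[of x] unfolding k_def by linarith
    then show ?thesis by (simp flip: exp_add)
  qed
  have "(\<integral>\<^sup>+ m. ennreal (exp (- \<bar>of_int m - x\<bar>)) \<partial>count_space UNIV)
      \<le> (\<integral>\<^sup>+ m. ennreal (exp 1) * ennreal (exp (- \<bar>of_int (m - k)\<bar>)) \<partial>count_space UNIV)"
    using shift by (intro nn_integral_mono) (simp flip: ennreal_mult)
  also have "\<dots> = ennreal (exp 1) * (\<integral>\<^sup>+ j. ennreal (exp (- \<bar>of_int j\<bar>)) \<partial>count_space UNIV)"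
    using nn_integral_bij_count_space[OF bij_betwI[where g = "\<lambda>j. j + k"],
        of "\<lambda>m. m - k" UNIV UNIV "\<lambda>j. ennreal (exp (- \<bar>of_int j\<bar>))"]
    by (simp add: nn_integral_cmult)
  also have "\<dots> \<le> ennreal (exp 1) * (ennreal (1 / (1 - exp (-1))) + ennreal (1 / (1 - exp (-1))))"
    using nn_integral_count_space_int_le[of "\<lambda>j. ennreal (exp (- \<bar>of_int j\<bar>))"]
    by (intro mult_left_mono) (simp_all add: nn_integral_exp_neg_nat)
  also have "\<dots> = ennreal (2 * exp 1 / (1 - exp (-1)))"
    by (simp flip: ennreal_plus ennreal_mult)
  finally show ?thesis .
qed

lemma nn_integral_lattice_weight_le:
  fixes z :: complex
  shows "(\<integral>\<^sup>+ p. ennreal (exp (- \<bar>of_int (fst p) - Re z\<bar>) * exp (- \<bar>of_int (snd p) - Im z\<bar>))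
      \<partial>count_space UNIV) \<le> ennreal ((2 * exp 1 / (1 - exp (-1))) ^ 2)"
proof -
  let ?K = "2 * exp 1 / (1 - exp (-1::real))"
  let ?E = "\<lambda>m r. ennreal (exp (- \<bar>of_int m - r\<bar>))"
  have "(\<integral>\<^sup>+ p. ennreal (exp (- \<bar>of_int (fst p) - Re z\<bar>) * exp (- \<bar>of_int (snd p) - Im z\<bar>))
      \<partial>count_space UNIV) = (\<integral>\<^sup>+ m. \<integral>\<^sup>+ n. ?E m (Re z) * ?E n (Im z) \<partial>count_space UNIV \<partial>count_space UNIV)"
    by (subst nn_integral_fst_count_space[symmetric]) (simp add: ennreal_mult)
  also have "\<dots> = (\<integral>\<^sup>+ m. ?E m (Re z) \<partial>count_space UNIV) * (\<integral>\<^sup>+ n. ?E n (Im z) \<partial>count_space UNIV)"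
    by (simp add: nn_integral_cmult nn_integral_multc)
  also have "\<dots> \<le> ennreal ?K * ennreal ?K"
    by (intro mult_mono nn_integral_exp_neg_abs_shift_le) auto
  also have "\<dots> = ennreal (?K ^ 2)"
    unfolding power2_eq_square by (rule ennreal_mult[symmetric]) simp_all
  finally show ?thesis .
qed

definition normalized_fock_kernel :: "real \<Rightarrow> complex \<Rightarrow> complex \<Rightarrow> complex" where
  "normalized_fock_kernel \<alpha> b z = exp (of_real \<alpha> * cnj b * z - of_real (\<alpha> * (cmod b)\<^sup>2 / 2))"

lemma norm_normalized_fock_kernel_mult_weight:
  "cmod (normalized_fock_kernel \<alpha> b z) * fock_weight \<alpha> z = exp (- \<alpha> * (cmod (z - b))\<^sup>2 / 2)"
proof -
  have "cmod (normalized_fock_kernel \<alpha> b z) * fock_weight \<alpha> z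
      = exp (\<alpha> * (Re b * Re z + Im b * Im z) - \<alpha> * (cmod b)\<^sup>2 / 2 + (- \<alpha> * (cmod z)\<^sup>2 / 2))"
    unfolding normalized_fock_kernel_def fock_weight_def exp_add by (simp add: algebra_simps)
  also have "\<dots> = exp (- \<alpha> * (cmod (z - b))\<^sup>2 / 2)"
    unfolding cmod_power2 by (simp add: power2_eq_square field_simps)
  finally show ?thesis .
qed

lemma in_fock_inf_normalized_fock_kernel:
  assumes "\<alpha> \<ge> 0"
  shows "in_fock_inf \<alpha> (normalized_fock_kernel \<alpha> b)"
  unfolding in_fock_inf_def norm_normalized_fock_kernel_mult_weight
proof
  show "normalized_fock_kernel \<alpha> b holomorphic_on UNIV"
    unfolding normalized_fock_kernel_def by (intro holomorphic_intros)
  show "bdd_above (range (\<lambda>z. exp (- \<alpha> * (cmod (z - b))\<^sup>2 / 2)))"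
    using assms by (intro bdd_aboveI[of _ 1]) (auto simp: zero_le_mult_iff)
qed

lemma fock_inf_norm_normalized_fock_kernel:
  assumes "\<alpha> \<ge> 0"
  shows "fock_inf_norm \<alpha> (normalized_fock_kernel \<alpha> b) = 1"
  unfolding fock_inf_norm_def norm_normalized_fock_kernel_mult_weight
  using assms by (intro cSup_eq_maximum) (auto simp: zero_le_mult_iff image_iff intro!: bexI[of _ b])

lemma fock_carleson_gaussian_bound:
  assumes "fock_carleson_inf \<alpha> q \<mu>" "\<alpha> \<ge> 0"
  obtains B where "B \<ge> 0" "\<And>b. (\<integral>\<^sup>+ w. ennreal (exp (- (q * \<alpha> / 2) * (cmod (w - b))\<^sup>2)) \<partial>\<mu>) \<le> ennreal B"
proof -
  obtain C where C: "\<And>f. in_fock_inf \<alpha> f \<Longrightarrow>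
      (\<integral>\<^sup>+ z. ennreal ((cmod (f z) * fock_weight \<alpha> z) powr q) \<partial>\<mu>) \<le> ennreal ((C * fock_inf_norm \<alpha> f) powr q)"
    using assms(1) unfolding fock_carleson_inf_def by blast
  have "(\<integral>\<^sup>+ w. ennreal (exp (- (q * \<alpha> / 2) * (cmod (w - b))\<^sup>2)) \<partial>\<mu>) \<le> ennreal (C powr q)" for b
  proof -
    have "(\<integral>\<^sup>+ w. ennreal (exp (- (q * \<alpha> / 2) * (cmod (w - b))\<^sup>2)) \<partial>\<mu>)
        = (\<integral>\<^sup>+ z. ennreal ((cmod (normalized_fock_kernel \<alpha> b z) * fock_weight \<alpha> z) powr q) \<partial>\<mu>)"
      unfolding norm_normalized_fock_kernel_mult_weight by (intro nn_integral_cong) (simp add: powr_def algebra_simps)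
    also have "\<dots> \<le> ennreal (C powr q)"
      using C[OF in_fock_inf_normalized_fock_kernel[OF assms(2)]] by (simp add: fock_inf_norm_normalized_fock_kernel assms(2))
    finally show ?thesis .
  qed
  then show ?thesis by (rule that[rotated]) simp
qed

lemma gaussian_le_nearest_lattice_term:
  fixes s a :: real and z w :: complex
  assumes "s > 0" "a > 0"
  defines "m \<equiv> round (Re w)" and "n \<equiv> round (Im w)"
  shows "exp (- s * (cmod (z - w))\<^sup>2)
    \<le> exp (1 + a + 1/s) * (exp (- \<bar>of_int m - Re z\<bar>) * exp (- \<bar>of_int n - Im z\<bar>))
      * exp (- a * (cmod (w - Complex (of_int m) (of_int n)))\<^sup>2)"
proof -
  define r where "r = cmod (z - w)"
  have round_Re: "\<bar>of_int m - Re w\<bar> \<le> 1/2" and round_Im: "\<bar>of_int n - Im w\<bar> \<le> 1/2"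
    unfolding m_def n_def by (rule of_int_round_abs_le)+
  have "\<bar>Re w - Re z\<bar> \<le> r" "\<bar>Im w - Im z\<bar> \<le> r"
    unfolding r_def using abs_Re_le_cmod[of "w - z"] abs_Im_le_cmod[of "w - z"]
    by (simp_all add: norm_minus_commute)
  then have dist_Re: "\<bar>of_int m - Re z\<bar> \<le> r + 1/2" and dist_Im: "\<bar>of_int n - Im z\<bar> \<le> r + 1/2"
    using round_Re round_Im by linarith+
  have "(cmod (w - Complex (of_int m) (of_int n)))\<^sup>2 \<le> (1/2)\<^sup>2 + (1/2)\<^sup>2"
    unfolding cmod_power2 using round_Re round_Im
    by (intro add_mono) (simp_all add: power2_le_iff_abs_le abs_minus_commute)
  then have near: "a * (cmod (w - Complex (of_int m) (of_int n)))\<^sup>2 \<le> a"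
    using assms(2) by (simp add: power2_eq_square)
  have am_gm: "2 * r \<le> 1/s + s * r\<^sup>2"
  proof -
    have "1/s + s * r\<^sup>2 - 2 * r = (s * r - 1)\<^sup>2 / s"
      using assms(1) by (simp add: field_simps power2_eq_square)
    moreover have "0 \<le> (s * r - 1)\<^sup>2 / s"
      using assms(1) by simp
    ultimately show ?thesis by linarith
  qed
  have "- s * r\<^sup>2
      \<le> (1 + a + 1/s) + (- \<bar>of_int m - Re z\<bar> + - \<bar>of_int n - Im z\<bar>)
        + - a * (cmod (w - Complex (of_int m) (of_int n)))\<^sup>2"
    using dist_Re dist_Im near am_gm by linarith
  then show ?thesis unfolding r_def by (simp flip: exp_add)
qed

lemma gaussian_integral_bound_any_width:
  fixes \<mu> :: "complex measure" and a s :: real and B :: ennreal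
  assumes "sets \<mu> = sets borel" "a > 0" "s > 0"
    and "\<And>b. (\<integral>\<^sup>+ w. ennreal (exp (- a * (cmod (w - b))\<^sup>2)) \<partial>\<mu>) \<le> B"
  shows "(\<integral>\<^sup>+ w. ennreal (exp (- s * (cmod (z - w))\<^sup>2)) \<partial>\<mu>)
    \<le> ennreal (exp (1 + a + 1/s) * (2 * exp 1 / (1 - exp (-1))) ^ 2) * B"
proof -
  define c where "c = exp (1 + a + 1/s)"
  define W where "W p = exp (- \<bar>of_int (fst p) - Re z\<bar>) * exp (- \<bar>of_int (snd p) - Im z\<bar>)"
    for p :: "int \<times> int"
  define lat where "lat p = Complex (of_int (fst p)) (of_int (snd p))" for p :: "int \<times> int"
  define G where "G p w = ennreal (c * W p) * ennreal (exp (- a * (cmod (w - lat p))\<^sup>2))" for p w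
  have dominated: "ennreal (exp (- s * (cmod (z - w))\<^sup>2)) \<le> (\<integral>\<^sup>+ p. G p w \<partial>count_space UNIV)" for w
  proof -
    define p0 where "p0 = (round (Re w), round (Im w))"
    have "exp (- s * (cmod (z - w))\<^sup>2) \<le> c * W p0 * exp (- a * (cmod (w - lat p0))\<^sup>2)"
      using gaussian_le_nearest_lattice_term[OF assms(3,2), of z w]
      unfolding c_def W_def lat_def p0_def by simp
    then have "ennreal (exp (- s * (cmod (z - w))\<^sup>2)) \<le> G p0 w"
      unfolding G_def c_def W_def by (simp flip: ennreal_mult)
    also have "\<dots> = (\<integral>\<^sup>+ p. G p w * indicator {p0} p \<partial>count_space UNIV)"
      by simp
    also have "\<dots> \<le> (\<integral>\<^sup>+ p. G p w \<partial>count_space UNIV)"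
      by (intro nn_integral_mono) (simp split: split_indicator)
    finally show ?thesis .
  qed
  have gauss_measurable: "(\<lambda>w. ennreal (exp (- a * (cmod (w - b))\<^sup>2))) \<in> borel_measurable \<mu>" for b
    unfolding measurable_cong_sets[OF assms(1) refl] by measurable
  have "(\<integral>\<^sup>+ w. ennreal (exp (- s * (cmod (z - w))\<^sup>2)) \<partial>\<mu>)
      \<le> (\<integral>\<^sup>+ w. \<integral>\<^sup>+ p. G p w \<partial>count_space UNIV \<partial>\<mu>)"
    by (intro nn_integral_mono dominated)
  also have "\<dots> = (\<integral>\<^sup>+ p. \<integral>\<^sup>+ w. G p w \<partial>\<mu> \<partial>count_space UNIV)"
    unfolding G_def using gauss_measurable by (intro nn_integral_count_space_nn_integral) auto
  also have "\<dots> \<le> (\<integral>\<^sup>+ p. ennreal (c * W p) * B \<partial>count_space UNIV)"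
    unfolding G_def nn_integral_cmult[OF gauss_measurable]
    by (intro nn_integral_mono mult_left_mono assms(4)) simp
  also have "\<dots> = ennreal c * (\<integral>\<^sup>+ p. ennreal (W p) \<partial>count_space UNIV) * B"
    unfolding c_def W_def by (simp add: nn_integral_multc nn_integral_cmult ennreal_mult)
  also have "\<dots> \<le> ennreal c * ennreal ((2 * exp 1 / (1 - exp (-1))) ^ 2) * B"
    unfolding W_def by (intro mult_right_mono mult_left_mono nn_integral_lattice_weight_le) auto
  finally show ?thesis
    unfolding c_def by (simp add: ennreal_mult)
qed

theorem theorem2p7:
  fixes \<alpha> q :: real and \<mu> :: "complex measure"
  assumes "\<alpha> > 0" and "q > 0"
    and "sets \<mu> = sets borel"
    and "fock_carleson_inf \<alpha> q \<mu>"
  shows "\<forall>t>0. ess_bounded_area (mu_tilde \<alpha> \<mu> t)"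
proof (intro allI impI)
  fix t :: real
  assume "t > 0"
  obtain B where "B \<ge> 0" and B: "\<And>b. (\<integral>\<^sup>+ w. ennreal (exp (- (q * \<alpha> / 2) * (cmod (w - b))\<^sup>2)) \<partial>\<mu>) \<le> ennreal B"
    using fock_carleson_gaussian_bound[OF assms(4)] assms(1) by auto
  define K where "K = exp (1 + q * \<alpha> / 2 + 1 / (\<alpha> * t / 2)) * (2 * exp 1 / (1 - exp (-1))) ^ 2"
  have "K \<ge> 0"
    unfolding K_def by simp
  have "mu_tilde \<alpha> \<mu> t z \<le> ennreal (\<alpha> / pi * (K * B))" for z
  proof -
    have "(\<integral>\<^sup>+ w. ennreal (exp (- \<alpha> * t * (cmod (z - w))\<^sup>2 / 2)) \<partial>\<mu>) \<le> ennreal K * ennreal B"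
      using gaussian_integral_bound_any_width[OF assms(3) _ _ B, of "\<alpha> * t / 2" z] assms(1,2) \<open>t > 0\<close>
      unfolding K_def by (simp add: mult_ac)
    then have "mu_tilde \<alpha> \<mu> t z \<le> ennreal (\<alpha> / pi) * (ennreal K * ennreal B)"
      unfolding mu_tilde_def by (rule mult_left_mono) simp
    also have "\<dots> = ennreal (\<alpha> / pi * (K * B))"
      unfolding ennreal_mult[OF \<open>K \<ge> 0\<close> \<open>B \<ge> 0\<close>, symmetric]
      using assms(1) \<open>K \<ge> 0\<close> \<open>B \<ge> 0\<close> by (intro ennreal_mult[symmetric]) simp_all
    finally show ?thesis .
  qed
  then show "ess_bounded_area (mu_tilde \<alpha> \<mu> t)"
    unfolding ess_bounded_area_def by blast
qed

end
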